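(* Let $\Sigma$ be a finite alphabet. For every finite language $S \subseteq \Sigma^*$, the string decomposition cost equals the optimal alignment cost: $c_d(S) = c(S)$.
   Context: String decomposition cost: given strings $w_1,\dots,w_n$ (the elements of $S$), a decomposition consists of strings $x_1,\dots,x_m$ and, for each $i$, an integer $l_i \ge 0$ and a strictly increasing function $p_i:\{1,\dots,l_i\}\to\{1,\dots,m\}$ with $w_i = x_{p_i(1)}x_{p_i(2)}\cdots x_{p_i(l_i)}$. The cost of the decomposition is $\sum_{k=1}^m |x_k|$, and $c_d(w_1,\dots,w_n)=c_d(S)$ is the minimum cost over all decompositions. Alignment cost: an alignment tuple is an element $(u_1,\dots,u_n) \in (\Sigma\cup\{\lambda\})^n \setminus \{\lambda\}^n$ ($\lambda$ the empty string) whose non-$\lambda$ entries are all equal to a single symbol $\sigma\in\Sigma$; an alignment of $w_1,\dots,w_n$ is a sequence $t_1\cdots t_m$ of alignment tuples such that for each $i$ the concatenation of the $i$-th components of $t_1,\dots,t_m$ equals $w_i$; its cost is $m$, and $c(S)$ is the minimum alignment cost. *)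

theory Defs
  imports Main
begin

text \<open>Strings over the alphabet are lists. The strings of the finite language S index
  themselves (w_1,...,w_n are the elements of S).\<close>

definition is_decomposition :: "'a set \<Rightarrow> 'a list set \<Rightarrow> 'a list list \<Rightarrow> ('a list \<Rightarrow> nat list) \<Rightarrow> bool" where
  "is_decomposition \<Sigma> S xs p \<longleftrightarrow>
     (\<forall>x \<in> set xs. x \<in> lists \<Sigma>) \<and>
     (\<forall>w \<in> S. sorted_wrt (<) (p w) \<and> (\<forall>j \<in> set (p w). j < length xs) \<and>
               concat (map (\<lambda>j. xs ! j) (p w)) = w)"

definition decomp_cost :: "'a list list \<Rightarrow> nat" where
  "decomp_cost xs = sum_list (map length xs)"

definition c_d :: "'a set \<Rightarrow> 'a list set \<Rightarrow> nat" where
  "c_d \<Sigma> S = (LEAST k. \<exists>xs p. is_decomposition \<Sigma> S xs p \<and> decomp_cost xs = k)"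

text \<open>An alignment tuple: a component for each w in S, either \<lambda> (None) or a symbol (Some \<sigma>);
  not all components are \<lambda>, and all non-\<lambda> components equal a single symbol of the alphabet.\<close>
definition is_alignment_tuple :: "'a set \<Rightarrow> 'a list set \<Rightarrow> ('a list \<Rightarrow> 'a option) \<Rightarrow> bool" where
  "is_alignment_tuple \<Sigma> S t \<longleftrightarrow>
     (\<exists>w \<in> S. t w \<noteq> None) \<and>
     (\<exists>\<sigma> \<in> \<Sigma>. \<forall>w \<in> S. t w = None \<or> t w = Some \<sigma>)"

definition component_string :: "'a option \<Rightarrow> 'a list" where
  "component_string u = (case u of None \<Rightarrow> [] | Some \<sigma> \<Rightarrow> [\<sigma>])"

definition is_alignment :: "'a set \<Rightarrow> 'a list set \<Rightarrow> ('a list \<Rightarrow> 'a option) list \<Rightarrow> bool" where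
  "is_alignment \<Sigma> S ts \<longleftrightarrow>
     (\<forall>t \<in> set ts. is_alignment_tuple \<Sigma> S t) \<and>
     (\<forall>w \<in> S. concat (map (\<lambda>t. component_string (t w)) ts) = w)"

definition c_align :: "'a set \<Rightarrow> 'a list set \<Rightarrow> nat" where
  "c_align \<Sigma> S = (LEAST m. \<exists>ts. is_alignment \<Sigma> S ts \<and> length ts = m)"

end

theory Submission
  imports Defs
begin

text \<open>An alignment column carrying the symbol \<sigma> is the same thing as a piece x = \<sigma> of length one,
  used by exactly the strings whose component is not \<lambda>; so every alignment is a decomposition
  of the same cost. Conversely, a piece x of a decomposition can be spelled out as |x| columns,
  the i-th carrying the i-th symbol of x in the strings that use x and \<lambda> elsewhere; pieces used by
  no string are dropped, so every decomposition yields an alignment of at most its cost.\<close>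

lemma concat_map_filter:
  "concat (map g (filter P xs)) = concat (map (\<lambda>x. if P x then g x else []) xs)"
  by (induction xs) auto

lemma concat_map_concat:
  "concat (map f (concat xss)) = concat (map (\<lambda>xs. concat (map f xs)) xss)"
  by (induction xss) auto

lemma map_conv_map_nth_upt: "map f xs = map (\<lambda>i. f (xs ! i)) [0..<length xs]"
  by (rule nth_equalityI) auto

lemma filter_mem_upt_eq:
  assumes "sorted_wrt (<) l" and "\<forall>j \<in> set l. j < n"
  shows "filter (\<lambda>k. k \<in> set l) [0..<n] = l"
  using assms by (intro strict_sorted_equal) (auto simp: sorted_wrt_filter)

lemma Least_eq_Least_if_dominating:
  fixes P Q :: "'a::wellorder \<Rightarrow> bool"
  assumes "\<exists>k. P k"
    and P_Q: "\<And>k. P k \<Longrightarrow> \<exists>m \<le> k. Q m"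
    and Q_P: "\<And>m. Q m \<Longrightarrow> \<exists>k \<le> m. P k"
  shows "(LEAST k. P k) = (LEAST m. Q m)"
proof (rule antisym)
  have "P (LEAST k. P k)" using assms(1) by (rule LeastI_ex)
  then obtain m where "Q m" "m \<le> (LEAST k. P k)" using P_Q by blast
  from \<open>Q m\<close> have "Q (LEAST m. Q m)" by (rule LeastI)
  then obtain k where "P k" "k \<le> (LEAST m. Q m)" using Q_P by blast
  then show "(LEAST k. P k) \<le> (LEAST m. Q m)" using Least_le order_trans by blast
  show "(LEAST m. Q m) \<le> (LEAST k. P k)"
    using \<open>Q m\<close> \<open>m \<le> (LEAST k. P k)\<close> Least_le order_trans by blast
qed

lemma decomposition_exists:
  assumes "finite S" and "S \<subseteq> lists \<Sigma>"
  shows "\<exists>xs p. is_decomposition \<Sigma> S xs p"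
proof -
  obtain xs where xs: "set xs = S" using \<open>finite S\<close> finite_list by blast
  then have "\<forall>w \<in> S. \<exists>j. j < length xs \<and> xs ! j = w"
    by (auto simp: in_set_conv_nth)
  then obtain idx where idx: "\<forall>w \<in> S. idx w < length xs \<and> xs ! idx w = w"
    by (auto dest!: bchoice)
  have "is_decomposition \<Sigma> S xs (\<lambda>w. [idx w])"
    using xs idx \<open>S \<subseteq> lists \<Sigma>\<close> by (auto simp: is_decomposition_def)
  then show ?thesis by blast
qed

lemma decomposition_of_alignment:
  assumes "is_alignment \<Sigma> S ts"
  shows "\<exists>xs p. is_decomposition \<Sigma> S xs p \<and> decomp_cost xs = length ts"
proof -
  have "\<forall>t \<in> set ts. \<exists>\<sigma>. \<sigma> \<in> \<Sigma> \<and> (\<forall>w \<in> S. t w = None \<or> t w = Some \<sigma>)"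
    using assms by (auto simp: is_alignment_def is_alignment_tuple_def)
  then obtain symbol where symbol:
      "\<forall>t \<in> set ts. symbol t \<in> \<Sigma> \<and> (\<forall>w \<in> S. t w = None \<or> t w = Some (symbol t))"
    by (auto dest!: bchoice)
  then have symbol_component: "component_string (t w) = (if t w = None then [] else [symbol t])"
    if "t \<in> set ts" "w \<in> S" for t w
    using that by (force simp: component_string_def)
  define xs where "xs = map (\<lambda>t. [symbol t]) ts"
  define p where "p w = filter (\<lambda>k. (ts ! k) w \<noteq> None) [0..<length ts]" for w
  have "concat (map (\<lambda>j. xs ! j) (p w)) = w" if "w \<in> S" for w
  proof -
    have "concat (map (\<lambda>j. xs ! j) (p w))
        = concat (map (\<lambda>k. if (ts ! k) w = None then [] else [symbol (ts ! k)]) [0..<length ts])"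
      by (auto simp: p_def xs_def concat_map_filter intro!: arg_cong[where f = concat])
    also have "\<dots> = concat (map (\<lambda>k. component_string ((ts ! k) w)) [0..<length ts])"
      using symbol_component \<open>w \<in> S\<close> by (auto intro!: arg_cong[where f = concat])
    also have "\<dots> = concat (map (\<lambda>t. component_string (t w)) ts)"
      by (simp only: map_conv_map_nth_upt[of _ ts])
    also have "\<dots> = w" using assms \<open>w \<in> S\<close> by (auto simp: is_alignment_def)
    finally show ?thesis .
  qed
  then have "is_decomposition \<Sigma> S xs p"
    using symbol by (auto simp: is_decomposition_def xs_def p_def sorted_wrt_filter)
  moreover have "decomp_cost xs = length ts"
    by (simp add: decomp_cost_def xs_def comp_def sum_list_triv)
  ultimately show ?thesis by blast
qed

definition piece_columns ::
    "'a list set \<Rightarrow> 'a list list \<Rightarrow> ('a list \<Rightarrow> nat list) \<Rightarrow> nat \<Rightarrow> ('a list \<Rightarrow> 'a option) list" where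
  "piece_columns S xs p k =
     (if \<exists>w \<in> S. k \<in> set (p w)
      then map (\<lambda>c w. if k \<in> set (p w) then Some c else None) (xs ! k) else [])"

definition alignment_of_decomposition ::
    "'a list set \<Rightarrow> 'a list list \<Rightarrow> ('a list \<Rightarrow> nat list) \<Rightarrow> ('a list \<Rightarrow> 'a option) list" where
  "alignment_of_decomposition S xs p = concat (map (piece_columns S xs p) [0..<length xs])"

lemma component_strings_piece_columns:
  assumes "w \<in> S"
  shows "concat (map (\<lambda>t. component_string (t w)) (piece_columns S xs p k))
    = (if k \<in> set (p w) then xs ! k else [])"
  using assms by (auto simp: piece_columns_def comp_def component_string_def)

lemma is_alignment_alignment_of_decomposition:
  assumes dec: "is_decomposition \<Sigma> S xs p"
  shows "is_alignment \<Sigma> S (alignment_of_decomposition S xs p)"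
proof -
  have "is_alignment_tuple \<Sigma> S t" if "t \<in> set (alignment_of_decomposition S xs p)" for t
  proof -
    from that obtain k c where k: "k < length xs" "\<exists>w \<in> S. k \<in> set (p w)" "c \<in> set (xs ! k)"
      and t: "t = (\<lambda>w. if k \<in> set (p w) then Some c else None)"
      by (force simp: alignment_of_decomposition_def piece_columns_def split: if_splits)
    have "c \<in> \<Sigma>" using dec k(1,3) by (auto simp: is_decomposition_def)
    then show ?thesis using k(2) by (auto simp: is_alignment_tuple_def t)
  qed
  moreover have "concat (map (\<lambda>t. component_string (t w)) (alignment_of_decomposition S xs p)) = w"
    if "w \<in> S" for w
  proof -
    have "concat (map (\<lambda>t. component_string (t w)) (alignment_of_decomposition S xs p))
        = concat (map (\<lambda>k. if k \<in> set (p w) then xs ! k else []) [0..<length xs])"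
      using \<open>w \<in> S\<close>
      by (simp add: alignment_of_decomposition_def concat_map_concat comp_def
          component_strings_piece_columns)
    also have "\<dots> = concat (map (\<lambda>j. xs ! j) (filter (\<lambda>k. k \<in> set (p w)) [0..<length xs]))"
      by (simp add: concat_map_filter)
    also have "filter (\<lambda>k. k \<in> set (p w)) [0..<length xs] = p w"
      using dec \<open>w \<in> S\<close> by (intro filter_mem_upt_eq) (auto simp: is_decomposition_def)
    also have "concat (map (\<lambda>j. xs ! j) (p w)) = w"
      using dec \<open>w \<in> S\<close> by (auto simp: is_decomposition_def)
    finally show ?thesis .
  qed
  ultimately show ?thesis by (auto simp: is_alignment_def)
qed

lemma length_alignment_of_decomposition_le:
  "length (alignment_of_decomposition S xs p) \<le> decomp_cost xs"
proof -
  have "length (alignment_of_decomposition S xs p)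
      = (\<Sum>k\<leftarrow>[0..<length xs]. length (piece_columns S xs p k))"
    by (simp add: alignment_of_decomposition_def length_concat comp_def)
  also have "\<dots> \<le> (\<Sum>k\<leftarrow>[0..<length xs]. length (xs ! k))"
    by (intro sum_list_mono) (simp add: piece_columns_def)
  also have "\<dots> = decomp_cost xs"
    by (simp add: decomp_cost_def map_conv_map_nth_upt[of length xs])
  finally show ?thesis .
qed

theorem lemma3:
  fixes \<Sigma> :: "'a set" and S :: "'a list set"
  assumes "finite \<Sigma>" and "finite S" and "S \<subseteq> lists \<Sigma>"
  shows "c_d \<Sigma> S = c_align \<Sigma> S"
  unfolding c_d_def c_align_def
proof (rule Least_eq_Least_if_dominating)
  show "\<exists>k xs p. is_decomposition \<Sigma> S xs p \<and> decomp_cost xs = k"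
    using decomposition_exists[OF assms(2,3)] by blast
next
  fix k assume "\<exists>xs p. is_decomposition \<Sigma> S xs p \<and> decomp_cost xs = k"
  then show "\<exists>m \<le> k. \<exists>ts. is_alignment \<Sigma> S ts \<and> length ts = m"
    using is_alignment_alignment_of_decomposition length_alignment_of_decomposition_le by blast
next
  fix m assume "\<exists>ts. is_alignment \<Sigma> S ts \<and> length ts = m"
  then show "\<exists>k \<le> m. \<exists>xs p. is_decomposition \<Sigma> S xs p \<and> decomp_cost xs = k"
    using decomposition_of_alignment by blast
qed

end
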